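(* Let $k \geq 10$ be an integer. Then the $\mathbb{Z}$-module $\widetilde{M}_{2k}^{\mathbb{Z}}$ has a $\mathbb{Z}$-basis such that every element $f = \sum_{n \geq 0} a_f(n) q^n$ of this basis satisfies, for all $n \geq 1$, $$|a_f(n)| \leq \left(\frac{k+6}{6}\right)^{\frac{k^2}{3}} \cdot 109 \cdot 2^{2k-1} n^{2k-1} (1+\log(n))^k.$$
   Context: Let $q = e^{2\pi i z}$, $E_2 = 1 - 24\sum_{n\geq1}\sigma_1(n)q^n$, $E_4 = 1 + 240\sum_{n \geq 1}\sigma_3(n)q^n$, $E_6 = 1 - 504\sum_{n\geq1}\sigma_5(n)q^n$, with $\sigma_\ell(n)=\sum_{d\mid n} d^\ell$. The space $\widetilde{M}_{2k}$ of quasimodular forms of weight $2k$ for $\mathrm{SL}_2(\mathbb{Z})$ is the $\mathbb{C}$-span of the $q$-series $E_2^aE_4^bE_6^c$ with $2a+4b+6c=2k$, and $\widetilde{M}_{2k}^{\mathbb{Z}} = \widetilde{M}_{2k} \cap \mathbb{Z}[[q]]$ (a free $\mathbb{Z}$-module whose rank is $\dim_{\mathbb{C}} \widetilde{M}_{2k}$). A $\mathbb{Z}$-basis is a basis of $\widetilde{M}_{2k}^{\mathbb{Z}}$ as a $\mathbb{Z}$-module. *)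

theory Defs
  imports "HOL-Analysis.Analysis" "HOL-Computational_Algebra.Formal_Power_Series"
begin

definition sigma :: "nat \<Rightarrow> nat \<Rightarrow> nat" where
  "sigma l n = (\<Sum>d \<in> {d. d dvd n}. d ^ l)"

text \<open>Eisenstein series as formal q-series (coefficient n = coefficient of q^n).\<close>
definition E2 :: "complex fps" where
  "E2 = Abs_fps (\<lambda>n. if n = 0 then 1 else - 24 * of_nat (sigma 1 n))"
definition E4 :: "complex fps" where
  "E4 = Abs_fps (\<lambda>n. if n = 0 then 1 else 240 * of_nat (sigma 3 n))"
definition E6 :: "complex fps" where
  "E6 = Abs_fps (\<lambda>n. if n = 0 then 1 else - 504 * of_nat (sigma 5 n))"

definition wt_triples :: "nat \<Rightarrow> (nat \<times> nat \<times> nat) set" where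
  "wt_triples k = {(a, b, c). 2*a + 4*b + 6*c = 2*k}"

text \<open>Quasimodular forms of weight 2k: the complex span of the E2^a E4^b E6^c.\<close>
definition QM :: "nat \<Rightarrow> complex fps set" where
  "QM k = {f. \<exists>coef :: nat \<times> nat \<times> nat \<Rightarrow> complex.
      f = (\<Sum>(a, b, c) \<in> wt_triples k. fps_const (coef (a, b, c)) * E2 ^ a * E4 ^ b * E6 ^ c)}"

definition QMZ :: "nat \<Rightarrow> complex fps set" where
  "QMZ k = {f \<in> QM k. \<forall>n. fps_nth f n \<in> \<int>}"

definition is_Z_basis :: "complex fps set \<Rightarrow> (nat \<Rightarrow> complex fps) \<Rightarrow> nat \<Rightarrow> bool" where
  "is_Z_basis S b r \<longleftrightarrow> (\<forall>i<r. b i \<in> S) \<and>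
     (\<forall>f \<in> S. \<exists>!c :: nat \<Rightarrow> int. (\<forall>i\<ge>r. c i = 0) \<and>
          f = (\<Sum>i<r. fps_const (of_int (c i)) * b i))"

end

theory Submission
  imports Defs
begin

text \<open>
  Bounds \<open>|f\<^sub>n| \<le> A n\<^sup>w\<^sup>-\<^sup>1 (1 + log n)\<^sup>s\<close> for series with constant term \<open>1\<close> are stable
  under products (weights and log-exponents add, \<open>1 + A\<close> multiplies), and
  \<open>\<sigma>\<^sub>l(n) \<le> n\<^sup>l (1 + log n)\<close>; so every monomial \<open>E\<^sub>2\<^sup>a E\<^sub>4\<^sup>b E\<^sub>6\<^sup>c\<close> of weight \<open>2k\<close>
  has coefficients at most \<open>25\<^sup>k n\<^sup>2\<^sup>k\<^sup>-\<^sup>1 (1 + log n)\<^sup>k\<close>.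

  For the basis, pick monomials \<open>u\<^sub>0, \<dots>, u\<^sub>d\<^sub>-\<^sub>1\<close> spanning the same space and linear
  functionals \<open>\<phi>\<^sub>j\<close>, integral on integral series, with \<open>\<phi>\<^sub>j(u\<^sub>i) = D \<delta>\<^sub>i\<^sub>j\<close>. Then
  \<open>f \<mapsto> (\<phi>\<^sub>j f)\<^sub>j\<close> identifies the integral forms with a lattice between \<open>D \<int>\<^sup>d\<close> and
  \<open>\<int>\<^sup>d\<close>. Its Hermite normal form basis has entries in \<open>[0, D]\<close>, so each basis element
  is a combination of the \<open>u\<^sub>i\<close> with coefficients in \<open>[0, 1]\<close>, and its coefficients are
  bounded by \<open>d \<le> (k + 1)\<^sup>3\<close> times the monomial bound.
\<close>

section \<open>Divisor sums and coefficient growth\<close>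

lemma sigma_1_le:
  assumes "n \<ge> 1"
  shows "real (sigma 1 n) \<le> real n * (1 + ln (real n))"
proof -
  let ?S = "{d::nat. d dvd n}"
  have "real (sigma 1 n) = (\<Sum>d\<in>?S. real (n div d))"
    unfolding sigma_def of_nat_sum power_one_right
    by (rule sum.reindex_bij_witness[of _ "\<lambda>d. n div d" "\<lambda>d. n div d"])
      (use assms in \<open>auto elim!: dvdE\<close>)
  also have "\<dots> = (\<Sum>d\<in>?S. real n / real d)"
    by (intro sum.cong) (auto simp: real_of_nat_div)
  also have "\<dots> \<le> (\<Sum>d\<in>{1..n}. real n / real d)"
    using assms by (intro sum_mono2) (auto intro: dvd_imp_le simp: Suc_le_eq)
  also have "\<dots> = real n * harm n"
    by (simp add: harm_def sum_distrib_left field_simps)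
  also have "harm n \<le> 1 + ln (real n)"
    using euler_mascheroni_sequence_decreasing[of 1 n] assms by (simp add: harm_expand)
  finally show ?thesis
    by (simp add: mult_left_mono)
qed

lemma sigma_le_pow_mult_sigma_1:
  assumes "n \<ge> 1" "l \<ge> 1"
  shows "sigma l n \<le> n ^ (l - 1) * sigma 1 n"
  unfolding sigma_def sum_distrib_left
proof (intro sum_mono)
  fix d assume "d \<in> {d. d dvd n}"
  then have "d \<le> n"
    using assms(1) by (auto intro: dvd_imp_le)
  have "d ^ l = d ^ (l - 1) * d"
    using assms(2) by (simp add: power_eq_if)
  also have "\<dots> \<le> n ^ (l - 1) * d"
    using \<open>d \<le> n\<close> by (intro mult_right_mono power_mono) auto
  finally show "d ^ l \<le> n ^ (l - 1) * d ^ 1"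
    by simp
qed

lemma sigma_le:
  assumes "n \<ge> 1" "l \<ge> 1"
  shows "real (sigma l n) \<le> real n ^ l * (1 + ln (real n))"
proof -
  have "real (sigma l n) \<le> real n ^ (l - 1) * real (sigma 1 n)"
    using sigma_le_pow_mult_sigma_1[OF assms] by (metis of_nat_le_iff of_nat_mult of_nat_power)
  also have "\<dots> \<le> real n ^ (l - 1) * (real n * (1 + ln (real n)))"
    using sigma_1_le[OF assms(1)] by (intro mult_left_mono) auto
  also have "\<dots> = real n ^ l * (1 + ln (real n))"
    using assms(2) by (simp add: power_eq_if)
  finally show ?thesis .
qed

text \<open>The clause \<open>w = 0 \<longrightarrow> A = 0\<close> makes the constant series \<open>1\<close> the only member of weight
  \<open>0\<close>, so that the truncated exponent \<open>w - 1\<close> does no harm.\<close>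

definition coeff_growth :: "complex fps \<Rightarrow> real \<Rightarrow> nat \<Rightarrow> nat \<Rightarrow> bool" where
  "coeff_growth f A w s \<longleftrightarrow> fps_nth f 0 = 1 \<and> 0 \<le> A \<and> (w = 0 \<longrightarrow> A = 0) \<and>
     (\<forall>n\<ge>1. norm (fps_nth f n) \<le> A * real n ^ (w - 1) * (1 + ln (real n)) ^ s)"

lemma coeff_growth_weight_0:
  assumes "coeff_growth f A 0 s"
  shows "f = 1" "A = 0"
proof -
  show "A = 0"
    using assms by (simp add: coeff_growth_def)
  show "f = 1"
  proof (rule fps_ext)
    fix n show "fps_nth f n = fps_nth 1 n"
      using assms \<open>A = 0\<close> unfolding coeff_growth_def by (cases "n = 0") auto
  qed
qed

lemma coeff_growth_mono_log:
  assumes "coeff_growth f A w s" "s \<le> s'"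
  shows "coeff_growth f A w s'"
proof -
  have "A * real n ^ (w - 1) * (1 + ln (real n)) ^ s
          \<le> A * real n ^ (w - 1) * (1 + ln (real n)) ^ s'" if "n \<ge> 1" for n
    using assms that by (intro mult_left_mono power_increasing) (auto simp: coeff_growth_def)
  then show ?thesis
    using assms(1) unfolding coeff_growth_def by (meson order.trans)
qed

lemma coeff_growth_nth_le:
  assumes "coeff_growth f A w s" "1 \<le> i" "i \<le> n"
  shows "norm (fps_nth f i) \<le> A * (real n ^ (w - 1) * (1 + ln (real n)) ^ s)"
proof -
  have "norm (fps_nth f i) \<le> A * (real i ^ (w - 1) * (1 + ln (real i)) ^ s)"
    using assms by (simp add: coeff_growth_def mult.assoc)
  also have "\<dots> \<le> A * (real n ^ (w - 1) * (1 + ln (real n)) ^ s)"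
    using assms by (intro mult_left_mono mult_mono power_mono) (auto simp: coeff_growth_def)
  finally show ?thesis .
qed

lemma fps_mult_nth_split:
  assumes "n \<ge> 1"
  shows "fps_nth (f * g) n = fps_nth f 0 * fps_nth g n + fps_nth f n * fps_nth g 0
           + (\<Sum>i\<in>{1..<n}. fps_nth f i * fps_nth g (n - i))"
proof -
  have "{0..n} = insert 0 (insert n {1..<n})"
    using assms by auto
  then show ?thesis
    using assms by (simp add: fps_mult_nth add.assoc)
qed

lemma coeff_growth_mult_nth:
  assumes f: "coeff_growth f A w1 s1" and g: "coeff_growth g B w2 s2"
    and "w1 \<ge> 1" "w2 \<ge> 1" "n \<ge> 1"
  shows "norm (fps_nth (f * g) n)
           \<le> (A + B + A * B) * real n ^ (w1 + w2 - 1) * (1 + ln (real n)) ^ (s1 + s2)"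
proof -
  define L where "L = 1 + ln (real n)"
  define P1 where "P1 = real n ^ (w1 - 1) * L ^ s1"
  define P2 where "P2 = real n ^ (w2 - 1) * L ^ s2"
  define P where "P = real n ^ (w1 + w2 - 1) * L ^ (s1 + s2)"
  have A: "A \<ge> 0" and B: "B \<ge> 0" and "fps_nth f 0 = 1" "fps_nth g 0 = 1"
    using f g by (auto simp: coeff_growth_def)
  have "L \<ge> 1" "real n \<ge> 1"
    using \<open>n \<ge> 1\<close> by (auto simp: L_def)
  have "P1 \<le> P" "P2 \<le> P"
    unfolding P1_def P2_def P_def using \<open>L \<ge> 1\<close> \<open>real n \<ge> 1\<close> \<open>w1 \<ge> 1\<close> \<open>w2 \<ge> 1\<close>
    by (auto intro!: mult_mono power_increasing)
  have "real (n - 1) * (P1 * P2) \<le> real n * (P1 * P2)"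
    using \<open>L \<ge> 1\<close> by (intro mult_right_mono) (auto simp: P1_def P2_def)
  also have "\<dots> = P"
  proof -
    have w: "w1 + w2 - 1 = Suc ((w1 - 1) + (w2 - 1))"
      using \<open>w1 \<ge> 1\<close> \<open>w2 \<ge> 1\<close> by simp
    show ?thesis
      unfolding P1_def P2_def P_def w power_Suc power_add by (simp only: mult_ac)
  qed
  finally have P12: "real (n - 1) * (P1 * P2) \<le> P" .
  have "norm (fps_nth (f * g) n)
          \<le> norm (fps_nth g n) + norm (fps_nth f n)
            + (\<Sum>i\<in>{1..<n}. norm (fps_nth f i) * norm (fps_nth g (n - i)))"
    unfolding fps_mult_nth_split[OF \<open>n \<ge> 1\<close>] using \<open>fps_nth f 0 = 1\<close> \<open>fps_nth g 0 = 1\<close>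
    by (intro order.trans[OF norm_triangle_ineq] add_mono order.trans[OF norm_sum] sum_mono)
      (auto simp: norm_mult intro: order.trans[OF norm_triangle_ineq])
  also have "\<dots> \<le> B * P2 + A * P1 + (\<Sum>i\<in>{1..<n}. (A * P1) * (B * P2))"
    using coeff_growth_nth_le[OF f] coeff_growth_nth_le[OF g] A B \<open>n \<ge> 1\<close>
    unfolding P1_def P2_def L_def by (intro add_mono sum_mono mult_mono) auto
  also have "\<dots> = B * P2 + A * P1 + A * B * (real (n - 1) * (P1 * P2))"
    by (simp add: algebra_simps)
  also have "\<dots> \<le> B * P + A * P + A * B * P"
    using \<open>P1 \<le> P\<close> \<open>P2 \<le> P\<close> P12 A B by (intro add_mono mult_left_mono) auto
  also have "\<dots> = (A + B + A * B) * P"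
    by (simp add: algebra_simps)
  finally show ?thesis
    by (simp only: P_def L_def mult.assoc)
qed

lemma coeff_growth_mult:
  assumes f: "coeff_growth f A w1 s1" and g: "coeff_growth g B w2 s2"
  shows "coeff_growth (f * g) (A + B + A * B) (w1 + w2) (s1 + s2)"
proof (cases "w1 = 0 \<or> w2 = 0")
  case True
  then show ?thesis
  proof
    assume "w1 = 0"
    then show ?thesis
      using coeff_growth_weight_0[of f A s1] f coeff_growth_mono_log[OF g, of "s1 + s2"] by simp
  next
    assume "w2 = 0"
    then show ?thesis
      using coeff_growth_weight_0[of g B s2] g coeff_growth_mono_log[OF f, of "s1 + s2"] by simp
  qed
next
  case False
  then show ?thesis
    using f g coeff_growth_mult_nth[OF f g] by (auto simp: coeff_growth_def)
qed

lemma coeff_growth_power: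
  assumes "coeff_growth f A w s"
  shows "coeff_growth (f ^ m) ((1 + A) ^ m - 1) (m * w) (m * s)"
proof (induction m)
  case 0
  then show ?case
    by (simp add: coeff_growth_def)
next
  case (Suc m)
  have A: "A + ((1 + A) ^ m - 1) + A * ((1 + A) ^ m - 1) = (1 + A) ^ Suc m - 1"
    by (simp add: algebra_simps)
  from coeff_growth_mult[OF assms Suc] show ?case
    unfolding A by (simp add: mult.commute)
qed

lemma coeff_growth_divisor_sum_series:
  assumes "l \<ge> 1"
  shows "coeff_growth (Abs_fps (\<lambda>n. if n = 0 then 1 else c * of_nat (sigma l n))) (norm c) (Suc l) 1"
  using sigma_le[OF _ assms] by (auto simp: coeff_growth_def norm_mult mult.assoc intro!: mult_left_mono)

lemma coeff_growth_E2: "coeff_growth E2 24 2 1"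
  using coeff_growth_divisor_sum_series[of 1 "-24"] by (simp add: E2_def numeral_2_eq_2)

lemma coeff_growth_E4: "coeff_growth E4 240 4 1"
  using coeff_growth_divisor_sum_series[of 3 240] by (simp add: E4_def numeral_eq_Suc)

lemma coeff_growth_E6: "coeff_growth E6 504 6 1"
  using coeff_growth_divisor_sum_series[of 5 "-504"] by (simp add: E6_def numeral_eq_Suc)

definition Emonomial :: "nat \<times> nat \<times> nat \<Rightarrow> complex fps" where
  "Emonomial = (\<lambda>(a, b, c). E2 ^ a * E4 ^ b * E6 ^ c)"

lemma coeff_growth_Emonomial:
  "coeff_growth (Emonomial (a, b, c)) (25 ^ a * 241 ^ b * 505 ^ c - 1) (2*a + 4*b + 6*c) (a + b + c)"
proof -
  have mult: "coeff_growth (f * g) (X * Y - 1) (w1 + w2) (s1 + s2)"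
    if "coeff_growth f (X - 1) w1 s1" "coeff_growth g (Y - 1) w2 s2" for f g X Y w1 w2 s1 s2
  proof -
    have A: "X - 1 + (Y - 1) + (X - 1) * (Y - 1) = X * Y - 1"
      by (simp add: algebra_simps)
    show ?thesis
      using coeff_growth_mult[OF that] by (simp only: A)
  qed
  have "coeff_growth (E2 ^ a * E4 ^ b * E6 ^ c) ((1 + 24) ^ a * (1 + 240) ^ b * (1 + 504) ^ c - 1)
          (a * 2 + b * 4 + c * 6) (a * 1 + b * 1 + c * 1)"
    by (intro mult coeff_growth_power coeff_growth_E2 coeff_growth_E4 coeff_growth_E6)
  then show ?thesis
    by (simp add: Emonomial_def ac_simps)
qed

lemma norm_nth_Emonomial_le:
  assumes "t \<in> wt_triples k" "n \<ge> 1"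
  shows "norm (fps_nth (Emonomial t) n) \<le> 25 ^ k * real n ^ (2*k - 1) * (1 + ln (real n)) ^ k"
proof -
  obtain a b c where t: "t = (a, b, c)" and k: "2*a + 4*b + 6*c = 2*k"
    using assms(1) by (auto simp: wt_triples_def)
  define L where "L = 1 + ln (real n)"
  have "L \<ge> 1"
    using \<open>n \<ge> 1\<close> by (simp add: L_def)
  have "(25::real) ^ a * 241 ^ b * 505 ^ c \<le> 25 ^ a * 625 ^ b * 15625 ^ c"
    by (intro mult_mono power_mono) auto
  also have "\<dots> = 25 ^ (a + 2*b + 3*c)"
    by (simp add: power_add power_mult)
  also have "a + 2*b + 3*c = k"
    using k by simp
  finally have "(25::real) ^ a * 241 ^ b * 505 ^ c - 1 \<le> 25 ^ k"
    by simp
  moreover have "L ^ (a + b + c) \<le> L ^ k"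
    using k \<open>L \<ge> 1\<close> by (intro power_increasing) auto
  ultimately have "(25 ^ a * 241 ^ b * 505 ^ c - 1) * real n ^ (2*k - 1) * L ^ (a + b + c)
                     \<le> 25 ^ k * real n ^ (2*k - 1) * L ^ k"
    using \<open>L \<ge> 1\<close> by (intro mult_mono mult_right_mono) auto
  moreover have "norm (fps_nth (Emonomial t) n)
      \<le> (25 ^ a * 241 ^ b * 505 ^ c - 1) * real n ^ (2*k - 1) * L ^ (a + b + c)"
    using coeff_growth_Emonomial[of a b c] k \<open>n \<ge> 1\<close> unfolding coeff_growth_def t L_def
    by simp
  ultimately show ?thesis
    unfolding L_def by linarith
qed

section \<open>Integral series, integral functionals and spans\<close>

definition int_coeffs :: "complex fps \<Rightarrow> bool" where
  "int_coeffs f \<longleftrightarrow> (\<forall>n. fps_nth f n \<in> \<int>)"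

lemma int_coeffs_add: "int_coeffs f \<Longrightarrow> int_coeffs g \<Longrightarrow> int_coeffs (f + g)"
  unfolding int_coeffs_def by auto

lemma int_coeffs_diff: "int_coeffs f \<Longrightarrow> int_coeffs g \<Longrightarrow> int_coeffs (f - g)"
  unfolding int_coeffs_def by auto

lemma int_coeffs_mult: "int_coeffs f \<Longrightarrow> int_coeffs g \<Longrightarrow> int_coeffs (f * g)"
  unfolding int_coeffs_def fps_mult_nth by (auto intro!: Ints_sum Ints_mult)

lemma int_coeffs_power: "int_coeffs f \<Longrightarrow> int_coeffs (f ^ m)"
  by (induction m) (simp_all add: int_coeffs_mult, simp add: int_coeffs_def fps_one_nth)

lemma int_coeffs_const_mult: "c \<in> \<int> \<Longrightarrow> int_coeffs f \<Longrightarrow> int_coeffs (fps_const c * f)"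
  unfolding int_coeffs_def by auto

lemma int_coeffs_sum: "(\<And>i. i \<in> A \<Longrightarrow> int_coeffs (f i)) \<Longrightarrow> int_coeffs (\<Sum>i\<in>A. f i)"
  unfolding int_coeffs_def fps_sum_nth by (auto intro!: Ints_sum)

lemma int_coeffs_Emonomial: "int_coeffs (Emonomial t)"
proof -
  have "int_coeffs E2" "int_coeffs E4" "int_coeffs E6"
    by (auto simp: int_coeffs_def E2_def E4_def E6_def)
  then show ?thesis
    by (auto simp: Emonomial_def split: prod.split intro!: int_coeffs_mult int_coeffs_power)
qed

definition int_linear :: "(complex fps \<Rightarrow> complex) \<Rightarrow> bool" where
  "int_linear \<phi> \<longleftrightarrow> (\<forall>f g. \<phi> (f + g) = \<phi> f + \<phi> g) \<and> (\<forall>c f. \<phi> (fps_const c * f) = c * \<phi> f) \<and>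
     (\<forall>f. int_coeffs f \<longrightarrow> \<phi> f \<in> \<int>)"

lemma int_linear_nth: "int_linear (\<lambda>f. fps_nth f p)"
  by (simp add: int_linear_def int_coeffs_def)

lemma int_linear_add: "int_linear \<phi> \<Longrightarrow> int_linear \<psi> \<Longrightarrow> int_linear (\<lambda>f. \<phi> f + \<psi> f)"
  by (simp add: int_linear_def algebra_simps)

lemma int_linear_diff: "int_linear \<phi> \<Longrightarrow> int_linear \<psi> \<Longrightarrow> int_linear (\<lambda>f. \<phi> f - \<psi> f)"
  by (simp add: int_linear_def algebra_simps)

lemma int_linear_scale: "c \<in> \<int> \<Longrightarrow> int_linear \<phi> \<Longrightarrow> int_linear (\<lambda>f. c * \<phi> f)"
  by (simp add: int_linear_def algebra_simps)

lemma int_linear_sum: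
  assumes "\<And>j. j \<in> A \<Longrightarrow> int_linear (\<phi> j)" "\<And>j. j \<in> A \<Longrightarrow> c j \<in> \<int>"
  shows "int_linear (\<lambda>f. \<Sum>j\<in>A. c j * \<phi> j f)"
  using assms
proof (induction A rule: infinite_finite_induct)
  case (insert j A)
  then show ?case
    using int_linear_add[OF int_linear_scale] by simp
qed (simp_all add: int_linear_def)

lemma int_linear_zero:
  assumes "int_linear \<phi>"
  shows "\<phi> 0 = 0"
proof -
  have "\<phi> (fps_const 0 * 0) = 0 * \<phi> 0"
    using assms unfolding int_linear_def by blast
  then show ?thesis
    by simp
qed

lemma int_linear_lincomb:
  assumes "int_linear \<phi>"
  shows "\<phi> (\<Sum>i\<in>A. fps_const (x i) * f i) = (\<Sum>i\<in>A. x i * \<phi> (f i))"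
  by (induction A rule: infinite_finite_induct)
    (use assms in \<open>simp_all add: int_linear_zero int_linear_def\<close>)

definition fps_span :: "'i set \<Rightarrow> ('i \<Rightarrow> complex fps) \<Rightarrow> complex fps set" where
  "fps_span I v = {f. \<exists>x. f = (\<Sum>i\<in>I. fps_const (x i) * v i)}"

lemma fps_span_lincomb: "(\<Sum>i\<in>I. fps_const (x i) * v i) \<in> fps_span I v"
  unfolding fps_span_def by (rule CollectI, rule exI[of _ x], rule refl)

lemma fps_span_zero: "0 \<in> fps_span I v"
  unfolding fps_span_def by (auto intro!: exI[of _ "\<lambda>_. 0"])

lemma fps_span_add:
  assumes "f \<in> fps_span I v" "g \<in> fps_span I v"
  shows "f + g \<in> fps_span I v"
proof -
  obtain x y where "f = (\<Sum>i\<in>I. fps_const (x i) * v i)" "g = (\<Sum>i\<in>I. fps_const (y i) * v i)"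
    using assms by (auto simp: fps_span_def)
  then have eq: "f + g = (\<Sum>i\<in>I. fps_const (x i + y i) * v i)"
    by (simp add: distrib_right sum.distrib flip: fps_const_add)
  show ?thesis
    unfolding fps_span_def by (intro CollectI exI[of _ "\<lambda>i. x i + y i"] eq)
qed

lemma fps_span_smult:
  assumes "f \<in> fps_span I v"
  shows "fps_const c * f \<in> fps_span I v"
proof -
  obtain x where "f = (\<Sum>i\<in>I. fps_const (x i) * v i)"
    using assms by (auto simp: fps_span_def)
  then have eq: "fps_const c * f = (\<Sum>i\<in>I. fps_const (c * x i) * v i)"
    by (simp add: sum_distrib_left mult.assoc flip: fps_const_mult)
  show ?thesis
    unfolding fps_span_def by (intro CollectI exI[of _ "\<lambda>i. c * x i"] eq)
qed

lemma fps_span_sum: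
  "finite A \<Longrightarrow> (\<And>a. a \<in> A \<Longrightarrow> g a \<in> fps_span I v) \<Longrightarrow> (\<Sum>a\<in>A. g a) \<in> fps_span I v"
  by (induction A rule: finite_induct) (auto intro: fps_span_zero fps_span_add)

lemma fps_span_base:
  assumes "finite I" "i \<in> I"
  shows "v i \<in> fps_span I v"
proof -
  have eq: "v i = (\<Sum>j\<in>I. fps_const (if j = i then 1 else 0) * v j)"
    using assms by (simp add: if_distrib if_distribR cong: if_cong)
  show ?thesis
    unfolding fps_span_def by (intro CollectI exI[of _ "\<lambda>j. if j = i then 1 else 0"] eq)
qed

lemma fps_span_subset:
  assumes "finite I" "\<And>i. i \<in> I \<Longrightarrow> v i \<in> fps_span J u"
  shows "fps_span I v \<subseteq> fps_span J u"
  using assms unfolding fps_span_def[of I v] by (auto intro!: fps_span_sum fps_span_smult)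

section \<open>Hermite normal form of a lattice between \<open>D \<int>\<^sup>d\<close> and \<open>\<int>\<^sup>d\<close>\<close>

text \<open>A sublattice \<open>\<Gamma>\<close> of \<open>\<int>\<^sup>d\<close> containing \<open>D \<int>\<^sup>d\<close>; vectors are functions on \<open>nat\<close>
  vanishing from index \<open>d\<close> on.\<close>

locale full_rank_lattice =
  fixes d :: nat and D :: int and \<Gamma> :: "(nat \<Rightarrow> int) set"
  assumes D_pos: "0 < D"
    and add_closed: "y \<in> \<Gamma> \<Longrightarrow> z \<in> \<Gamma> \<Longrightarrow> (\<lambda>i. y i + z i) \<in> \<Gamma>"
    and smult_closed: "y \<in> \<Gamma> \<Longrightarrow> (\<lambda>i. a * y i) \<in> \<Gamma>"
    and vanishes_beyond: "y \<in> \<Gamma> \<Longrightarrow> d \<le> i \<Longrightarrow> y i = 0"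
    and unit_multiple: "j < d \<Longrightarrow> (\<lambda>i. if i = j then D else 0) \<in> \<Gamma>"
begin

lemma diff_closed: "y \<in> \<Gamma> \<Longrightarrow> z \<in> \<Gamma> \<Longrightarrow> (\<lambda>i. y i - z i) \<in> \<Gamma>"
  using add_closed[OF _ smult_closed[of z "-1"]] by simp

definition Gamma_ge :: "nat \<Rightarrow> (nat \<Rightarrow> int) set" where
  "Gamma_ge j = {y \<in> \<Gamma>. \<forall>i<j. y i = 0}"

lemma Gamma_ge_add: "y \<in> Gamma_ge j \<Longrightarrow> z \<in> Gamma_ge j \<Longrightarrow> (\<lambda>i. y i + z i) \<in> Gamma_ge j"
  unfolding Gamma_ge_def by (auto intro: add_closed)

lemma Gamma_ge_diff: "y \<in> Gamma_ge j \<Longrightarrow> z \<in> Gamma_ge j \<Longrightarrow> (\<lambda>i. y i - z i) \<in> Gamma_ge j"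
  unfolding Gamma_ge_def by (auto intro: diff_closed)

lemma Gamma_ge_smult: "y \<in> Gamma_ge j \<Longrightarrow> (\<lambda>i. a * y i) \<in> Gamma_ge j"
  unfolding Gamma_ge_def by (auto intro: smult_closed)

lemma Gamma_ge_Suc_subset: "Gamma_ge (Suc j) \<subseteq> Gamma_ge j"
  unfolding Gamma_ge_def by auto

lemma Gamma_ge_Suc_iff: "y \<in> Gamma_ge (Suc j) \<longleftrightarrow> y \<in> Gamma_ge j \<and> y j = 0"
  unfolding Gamma_ge_def by (auto simp: less_Suc_eq)

definition pivot :: "nat \<Rightarrow> nat" where
  "pivot j = (LEAST p. 0 < p \<and> (\<exists>y\<in>Gamma_ge j. y j = int p))"

lemma
  assumes "j < d"
  shows pivot_pos: "0 < pivot j"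
    and pivot_attained: "\<exists>y\<in>Gamma_ge j. y j = int (pivot j)"
    and pivot_le_D: "int (pivot j) \<le> D"
proof -
  let ?P = "\<lambda>p. 0 < p \<and> (\<exists>y\<in>Gamma_ge j. y j = int p)"
  have "?P (nat D)"
    using unit_multiple[OF assms] D_pos by (auto simp: Gamma_ge_def intro!: bexI)
  then have "?P (pivot j)" "pivot j \<le> nat D"
    unfolding pivot_def by (rule LeastI, rule Least_le)
  then show "0 < pivot j" "\<exists>y\<in>Gamma_ge j. y j = int (pivot j)" "int (pivot j) \<le> D"
    by auto
qed

lemma pivot_dvd:
  assumes "j < d" "y \<in> Gamma_ge j"
  shows "int (pivot j) dvd y j"
proof (rule ccontr)
  assume not_dvd: "\<not> int (pivot j) dvd y j"
  obtain v where v: "v \<in> Gamma_ge j" "v j = int (pivot j)"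
    using pivot_attained[OF assms(1)] by blast
  define r where "r = (\<lambda>i. y i - (y j div int (pivot j)) * v i)"
  have "r \<in> Gamma_ge j"
    unfolding r_def by (intro Gamma_ge_diff Gamma_ge_smult assms v)
  have r_j: "r j = y j mod int (pivot j)"
    unfolding r_def v(2) by (simp add: minus_div_mult_eq_mod)
  have "0 < int (pivot j)"
    using pivot_pos[OF assms(1)] by simp
  then have "0 \<le> r j" "r j < int (pivot j)" "r j \<noteq> 0"
    using not_dvd unfolding r_j by (simp_all add: dvd_eq_mod_eq_0)
  then have "0 < nat (r j) \<and> (\<exists>y\<in>Gamma_ge j. y j = int (nat (r j)))"
    using \<open>r \<in> Gamma_ge j\<close> by auto
  then have "pivot j \<le> nat (r j)"
    unfolding pivot_def by (rule Least_le)
  with \<open>0 \<le> r j\<close> \<open>r j < int (pivot j)\<close> show False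
    by linarith
qed

lemma reduce_mod_pivots:
  assumes "j \<le> d" "x \<in> \<Gamma>"
  shows "\<exists>z\<in>Gamma_ge j. \<forall>k. j \<le> k \<longrightarrow> k < d \<longrightarrow> 0 \<le> x k - z k \<and> x k - z k < int (pivot k)"
  using assms
proof (induction j arbitrary: x rule: inc_induct)
  case base
  have "(\<lambda>i. 0 * x i) \<in> Gamma_ge d"
    using smult_closed[OF base, of 0] by (simp add: Gamma_ge_def)
  then show ?case
    by (intro bexI) auto
next
  case (step j)
  obtain v where v: "v \<in> Gamma_ge j" "v j = int (pivot j)"
    using pivot_attained[OF step(2)] by blast
  define c where "c = x j div int (pivot j)"
  have "(\<lambda>i. x i - c * v i) \<in> \<Gamma>"
    using v(1) step.prems by (intro diff_closed smult_closed) (auto simp: Gamma_ge_def)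
  from step.IH[OF this] obtain z' where z': "z' \<in> Gamma_ge (Suc j)"
    "\<forall>k. Suc j \<le> k \<longrightarrow> k < d \<longrightarrow> 0 \<le> x k - c * v k - z' k \<and> x k - c * v k - z' k < int (pivot k)"
    by auto
  define z where "z = (\<lambda>i. c * v i + z' i)"
  have "z \<in> Gamma_ge j"
    unfolding z_def using Gamma_ge_Suc_subset z'(1) by (intro Gamma_ge_add Gamma_ge_smult v(1)) auto
  moreover have "0 \<le> x k - z k \<and> x k - z k < int (pivot k)" if "j \<le> k" "k < d" for k
  proof (cases "k = j")
    case True
    have "x j - z j = x j mod int (pivot j)"
      using z'(1) v(2) by (simp add: z_def c_def Gamma_ge_Suc_iff minus_div_mult_eq_mod)
    then show ?thesis
      using True pivot_pos[OF step(2)] by simp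
  next
    case False
    have "x k - z k = x k - c * v k - z' k"
      by (simp add: z_def)
    moreover have "Suc j \<le> k"
      using False that by simp
    ultimately show ?thesis
      using z'(2) that(2) by presburger
  qed
  ultimately show ?case
    by blast
qed

definition hnf_row :: "nat \<Rightarrow> nat \<Rightarrow> int" where
  "hnf_row j = (SOME w. w \<in> Gamma_ge j \<and> w j = int (pivot j) \<and>
                  (\<forall>k. j < k \<longrightarrow> k < d \<longrightarrow> 0 \<le> w k \<and> w k < int (pivot k)))"

lemma
  assumes "j < d"
  shows hnf_row_Gamma_ge: "hnf_row j \<in> Gamma_ge j"
    and hnf_row_diag: "hnf_row j j = int (pivot j)"
    and hnf_row_reduced: "\<And>k. j < k \<Longrightarrow> k < d \<Longrightarrow> 0 \<le> hnf_row j k \<and> hnf_row j k < int (pivot k)"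
proof -
  obtain v where v: "v \<in> Gamma_ge j" "v j = int (pivot j)"
    using pivot_attained[OF assms] by blast
  then obtain z where z: "z \<in> Gamma_ge (Suc j)"
    "\<forall>k. Suc j \<le> k \<longrightarrow> k < d \<longrightarrow> 0 \<le> v k - z k \<and> v k - z k < int (pivot k)"
    using reduce_mod_pivots[of "Suc j" v] assms by (auto simp: Gamma_ge_def)
  have "(\<lambda>i. v i - z i) \<in> Gamma_ge j" "z j = 0"
    using v(1) z(1) Gamma_ge_Suc_subset by (auto intro: Gamma_ge_diff simp: Gamma_ge_Suc_iff)
  then have "\<exists>w. w \<in> Gamma_ge j \<and> w j = int (pivot j) \<and>
               (\<forall>k. j < k \<longrightarrow> k < d \<longrightarrow> 0 \<le> w k \<and> w k < int (pivot k))"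
    using v(2) z(2) by (intro exI[of _ "\<lambda>i. v i - z i"]) (auto simp: Suc_le_eq)
  from someI_ex[OF this, folded hnf_row_def]
  show "hnf_row j \<in> Gamma_ge j" "hnf_row j j = int (pivot j)"
    "\<And>k. j < k \<Longrightarrow> k < d \<Longrightarrow> 0 \<le> hnf_row j k \<and> hnf_row j k < int (pivot k)"
    by auto
qed

lemma hnf_row_in_lattice: "j < d \<Longrightarrow> hnf_row j \<in> \<Gamma>"
  using hnf_row_Gamma_ge by (simp add: Gamma_ge_def)

lemma hnf_row_bounds:
  assumes "j < d"
  shows "0 \<le> hnf_row j k \<and> hnf_row j k \<le> D"
proof (cases "k < j \<or> d \<le> k")
  case True
  then have "hnf_row j k = 0"
    using hnf_row_Gamma_ge[OF assms] vanishes_beyond by (auto simp: Gamma_ge_def)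
  then show ?thesis
    using D_pos by simp
next
  case False
  then have "0 \<le> hnf_row j k \<and> hnf_row j k \<le> int (pivot k)"
    using hnf_row_diag[OF assms] hnf_row_reduced[OF assms, of k] by (cases "k = j") auto
  then show ?thesis
    using pivot_le_D[of k] False by auto
qed

lemma Gamma_ge_hnf_combination:
  assumes "j \<le> d" "y \<in> Gamma_ge j"
  shows "\<exists>c. (\<forall>l. l < j \<or> d \<le> l \<longrightarrow> c l = 0) \<and> y = (\<lambda>i. \<Sum>l<d. c l * hnf_row l i)"
  using assms
proof (induction j arbitrary: y rule: inc_induct)
  case base
  have "y i = 0" for i
    using base vanishes_beyond by (cases "i < d") (auto simp: Gamma_ge_def)
  then have "y = (\<lambda>i. 0)"
    by auto
  then show ?case
    by (intro exI[of _ "\<lambda>_. 0"]) auto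
next
  case (step j)
  obtain a where a: "y j = int (pivot j) * a"
    using pivot_dvd[OF step(2) step.prems] by (rule dvdE)
  have "(\<lambda>i. y i - a * hnf_row j i) \<in> Gamma_ge (Suc j)"
    using a hnf_row_Gamma_ge[OF step(2)] hnf_row_diag[OF step(2)] step.prems by (simp add: Gamma_ge_Suc_iff Gamma_ge_diff Gamma_ge_smult)
  then obtain c where c: "\<forall>l. l < Suc j \<or> d \<le> l \<longrightarrow> c l = 0"
    "(\<lambda>i. y i - a * hnf_row j i) = (\<lambda>i. \<Sum>l<d. c l * hnf_row l i)"
    using step.IH by blast
  have "y i = (\<Sum>l<d. (c(j := a)) l * hnf_row l i)" for i
  proof -
    have "(\<Sum>l<d. (c(j := a)) l * hnf_row l i)
            = (\<Sum>l<d. c l * hnf_row l i + (if l = j then a * hnf_row j i else 0))"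
      using c(1) by (intro sum.cong) auto
    also have "\<dots> = (\<Sum>l<d. c l * hnf_row l i) + a * hnf_row j i"
      using step(2) by (simp add: sum.distrib)
    finally show ?thesis
      using fun_cong[OF c(2), of i] by simp
  qed
  then show ?case
    using c(1) step(2) by (intro exI[of _ "c(j := a)"]) auto
qed

lemma hnf_combination_eq_0:
  assumes "\<forall>l. d \<le> l \<longrightarrow> c l = 0" "\<forall>i. (\<Sum>l<d. c l * hnf_row l i) = 0"
  shows "c l = 0"
proof (cases "l < d")
  case True
  then show ?thesis
  proof (induction l rule: less_induct)
    case (less l)
    have "(\<Sum>m<d. c m * hnf_row m l) = (\<Sum>m<d. if m = l then c l * int (pivot l) else 0)"
    proof (intro sum.cong refl)
      fix m assume "m \<in> {..<d}"
      consider "m < l" | "m = l" | "l < m"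
        by linarith
      then show "c m * hnf_row m l = (if m = l then c l * int (pivot l) else 0)"
      proof cases
        case 1
        then show ?thesis
          using less by auto
      next
        case 2
        then show ?thesis
          using hnf_row_diag less.prems by simp
      next
        case 3
        then show ?thesis
          using hnf_row_Gamma_ge[of m] \<open>m \<in> {..<d}\<close> by (auto simp: Gamma_ge_def)
      qed
    qed
    then have "c l * int (pivot l) = 0"
      using assms(2) less.prems by simp
    then show ?case
      using pivot_pos[OF less.prems] by simp
  qed
qed (use assms in auto)

theorem hnf_coordinates:
  assumes "y \<in> \<Gamma>"
  shows "\<exists>!c. (\<forall>l. d \<le> l \<longrightarrow> c l = 0) \<and> y = (\<lambda>i. \<Sum>l<d. c l * hnf_row l i)"
proof -
  obtain c where c: "\<forall>l. d \<le> l \<longrightarrow> c l = 0" "y = (\<lambda>i. \<Sum>l<d. c l * hnf_row l i)"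
    using Gamma_ge_hnf_combination[of 0 y] assms by (auto simp: Gamma_ge_def)
  moreover have "c' = c" if "\<forall>l. d \<le> l \<longrightarrow> c' l = 0" "y = (\<lambda>i. \<Sum>l<d. c' l * hnf_row l i)" for c'
  proof -
    have "(\<Sum>l<d. (c' l - c l) * hnf_row l i) = 0" for i
      using fun_cong[OF c(2), of i] fun_cong[OF that(2), of i]
      by (simp add: left_diff_distrib sum_subtractf)
    then have "c' l - c l = 0" for l
      using c(1) that(1) by (intro hnf_combination_eq_0) simp_all
    then show ?thesis
      by auto
  qed
  ultimately show ?thesis
    by blast
qed

end

section \<open>Integral bases of spans of integral series\<close>

text \<open>The functionals \<open>\<phi> j / D\<close> are the coordinate functionals of the basis \<open>u 0, \<dots>, u (d - 1)\<close>
  of its span; the common denominator \<open>D\<close> makes them map integral series to integers.\<close>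

locale fps_dual_system =
  fixes d :: nat and u :: "nat \<Rightarrow> complex fps" and \<phi> :: "nat \<Rightarrow> complex fps \<Rightarrow> complex" and D :: int
  assumes int_coeffs_u: "i < d \<Longrightarrow> int_coeffs (u i)"
    and int_linear_\<phi>: "j < d \<Longrightarrow> int_linear (\<phi> j)"
    and D_pos: "0 < D"
    and \<phi>_u: "i < d \<Longrightarrow> j < d \<Longrightarrow> \<phi> j (u i) = (if i = j then of_int D else 0)"
begin

lemma \<phi>_lincomb:
  assumes "j < d"
  shows "\<phi> j (\<Sum>i<d. fps_const (x i) * u i) = of_int D * x j"
proof -
  have "\<phi> j (\<Sum>i<d. fps_const (x i) * u i) = (\<Sum>i<d. x i * \<phi> j (u i))"
    using int_linear_lincomb[OF int_linear_\<phi>[OF assms]] .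
  also have "\<dots> = (\<Sum>i<d. if i = j then x j * of_int D else 0)"
    using assms by (intro sum.cong) (auto simp: \<phi>_u)
  also have "\<dots> = of_int D * x j"
    using assms by (simp add: mult.commute)
  finally show ?thesis .
qed

lemma inj_on_u: "inj_on u {..<d}"
proof (rule inj_onI)
  fix i j assume "i \<in> {..<d}" "j \<in> {..<d}" "u i = u j"
  then have "\<phi> j (u i) \<noteq> 0"
    using \<phi>_u[of j j] D_pos by simp
  then show "i = j"
    using \<phi>_u[of i j] \<open>i \<in> {..<d}\<close> \<open>j \<in> {..<d}\<close> by (auto split: if_splits)
qed

lemma exists_separating_functional:
  assumes "int_coeffs m" "m \<notin> fps_span {..<d} u"
  shows "\<exists>\<psi> e. int_linear \<psi> \<and> (\<forall>i<d. \<psi> (u i) = 0) \<and> \<psi> m = of_int e \<and> 0 < e"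
proof -
  define S where "S = (\<Sum>j<d. fps_const (\<phi> j m) * u j)"
  define g where "g = fps_const (of_int D) * m - S"
  have "g \<noteq> 0"
  proof
    assume "g = 0"
    have "m = fps_const (inverse (of_int D) * of_int D) * m"
      using D_pos by simp
    also have "\<dots> = fps_const (inverse (of_int D)) * S"
      using \<open>g = 0\<close> by (simp add: g_def mult.assoc flip: fps_const_mult)
    finally have m: "m = fps_const (inverse (of_int D)) * S" .
    have "S \<in> fps_span {..<d} u"
      unfolding S_def by (rule fps_span_lincomb)
    then have "m \<in> fps_span {..<d} u"
      by (subst m) (rule fps_span_smult)
    with assms(2) show False ..
  qed
  then obtain p where "fps_nth g p \<noteq> 0"
    by (auto simp: fps_nonzero_nth)
  have "\<phi> j m \<in> \<int>" if "j < d" for j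
    using int_linear_\<phi>[OF that] assms(1) by (simp add: int_linear_def)
  then have "int_coeffs g"
    unfolding g_def S_def using assms(1) int_coeffs_u
    by (intro int_coeffs_diff int_coeffs_const_mult int_coeffs_sum) auto
  then obtain e0 where e0: "fps_nth g p = of_int e0"
    by (auto simp: int_coeffs_def elim!: Ints_cases)
  \<comment> \<open>\<open>\<psi>\<close> kills every \<open>u i\<close> and sends \<open>m\<close> to \<open>\<plusminus>g\<^sub>p\<close>, the \<open>p\<close>-th coefficient of the
    nonzero remainder \<open>g\<close> of \<open>D m\<close> modulo the span.\<close>
  define \<psi> where
    "\<psi> f = of_int (sgn e0) * (of_int D * fps_nth f p + (\<Sum>j<d. - fps_nth (u j) p * \<phi> j f))" for f
  have "int_linear \<psi>"
    unfolding \<psi>_def using int_coeffs_u int_linear_\<phi>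
    by (intro int_linear_scale int_linear_add int_linear_nth int_linear_sum)
       (auto simp: int_coeffs_def)
  moreover have "\<psi> (u i) = 0" if "i < d" for i
  proof -
    have "(\<Sum>j<d. - fps_nth (u j) p * \<phi> j (u i)) = (\<Sum>j<d. if j = i then - fps_nth (u i) p * of_int D else 0)"
      using that by (intro sum.cong) (auto simp: \<phi>_u)
    then show ?thesis
      using that by (simp add: \<psi>_def)
  qed
  moreover have "\<psi> m = of_int \<bar>e0\<bar>"
  proof -
    have "fps_nth g p = of_int D * fps_nth m p + (\<Sum>j<d. - fps_nth (u j) p * \<phi> j m)"
      by (simp add: g_def S_def fps_sum_nth sum_negf mult.commute)
    then show ?thesis
      using e0 by (simp add: \<psi>_def abs_sgn mult.commute)
  qed
  moreover have "0 < \<bar>e0\<bar>"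
    using e0 \<open>fps_nth g p \<noteq> 0\<close> by auto
  ultimately show ?thesis
    by blast
qed

lemma extend:
  assumes "int_coeffs m" "m \<notin> fps_span {..<d} u"
  shows "\<exists>\<phi>' D'. fps_dual_system (Suc d) (u(d := m)) \<phi>' D'"
proof -
  obtain \<psi> e where \<psi>: "int_linear \<psi>" "\<And>i. i < d \<Longrightarrow> \<psi> (u i) = 0" "\<psi> m = of_int e" "0 < e"
    using exists_separating_functional[OF assms] by blast
  have \<phi>_m: "\<phi> j m \<in> \<int>" if "j < d" for j
    using int_linear_\<phi>[OF that] assms(1) by (simp add: int_linear_def)
  define \<phi>' where
    "\<phi>' j = (if j < d then (\<lambda>f. of_int e * \<phi> j f - \<phi> j m * \<psi> f) else (\<lambda>f. of_int D * \<psi> f))" for j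
  have "fps_dual_system (Suc d) (u(d := m)) \<phi>' (D * e)"
  proof
    show "int_coeffs ((u(d := m)) i)" if "i < Suc d" for i
      using that assms(1) int_coeffs_u by (auto simp: less_Suc_eq)
    show "int_linear (\<phi>' j)" if "j < Suc d" for j
      unfolding \<phi>'_def using \<psi>(1) int_linear_\<phi> \<phi>_m
      by (auto intro!: int_linear_diff int_linear_scale)
    show "0 < D * e"
      using D_pos \<psi>(4) by simp
    show "\<phi>' j ((u(d := m)) i) = (if i = j then of_int (D * e) else 0)"
      if "i < Suc d" "j < Suc d" for i j
      using that \<psi>(2,3) \<phi>_u[of i j] by (auto simp: \<phi>'_def less_Suc_eq)
  qed
  then show ?thesis
    by blast
qed

end

lemma exists_fps_dual_system:
  assumes "finite G" "\<And>g. g \<in> G \<Longrightarrow> int_coeffs g"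
  shows "\<exists>d u \<phi> D. fps_dual_system d u \<phi> D \<and> u ` {..<d} \<subseteq> G \<and> G \<subseteq> fps_span {..<d} u"
  using assms
proof (induction G rule: finite_induct)
  case empty
  have "fps_dual_system 0 u \<phi> 1" for u \<phi>
    by unfold_locales auto
  then show ?case
    by blast
next
  case (insert m G)
  then obtain d u \<phi> D where dual: "fps_dual_system d u \<phi> D"
    and u: "u ` {..<d} \<subseteq> G" and G: "G \<subseteq> fps_span {..<d} u"
    by auto
  show ?case
  proof (cases "m \<in> fps_span {..<d} u")
    case True
    then show ?thesis
      using dual u G by blast
  next
    case False
    then obtain \<phi>' D' where "fps_dual_system (Suc d) (u(d := m)) \<phi>' D'"
      using fps_dual_system.extend[OF dual] insert.prems by blast
    moreover have "fps_span {..<d} u \<subseteq> fps_span {..<Suc d} (u(d := m))"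
    proof (intro fps_span_subset)
      fix i assume "i \<in> {..<d}"
      then show "u i \<in> fps_span {..<Suc d} (u(d := m))"
        using fps_span_base[of "{..<Suc d}" i "u(d := m)"] by simp
    qed simp
    moreover have "m \<in> fps_span {..<Suc d} (u(d := m))"
      using fps_span_base[of "{..<Suc d}" d "u(d := m)"] by simp
    moreover have "(u(d := m)) ` {..<Suc d} \<subseteq> insert m G"
      using u by (auto simp: less_Suc_eq image_subset_iff)
    ultimately show ?thesis
      using G by blast
  qed
qed

context fps_dual_system
begin

definition lattice_comb :: "(nat \<Rightarrow> int) \<Rightarrow> complex fps" where
  "lattice_comb y = (\<Sum>i<d. fps_const (of_int (y i) / of_int D) * u i)"

definition coord_lattice :: "(nat \<Rightarrow> int) set" where
  "coord_lattice = {y. (\<forall>i. d \<le> i \<longrightarrow> y i = 0) \<and> int_coeffs (lattice_comb y)}"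

lemma lattice_comb_in_span: "lattice_comb y \<in> fps_span {..<d} u"
  unfolding lattice_comb_def by (rule fps_span_lincomb)

lemma lattice_comb_add: "lattice_comb (\<lambda>i. y i + z i) = lattice_comb y + lattice_comb z"
  unfolding lattice_comb_def
  by (simp add: add_divide_distrib distrib_right sum.distrib flip: fps_const_add)

lemma lattice_comb_smult: "lattice_comb (\<lambda>i. a * y i) = fps_const (of_int a) * lattice_comb y"
  unfolding lattice_comb_def
  by (simp add: sum_distrib_left mult.assoc[symmetric])

lemma lattice_comb_sum:
  "lattice_comb (\<lambda>i. \<Sum>l\<in>A. c l * w l i) = (\<Sum>l\<in>A. fps_const (of_int (c l)) * lattice_comb (w l))"
proof (induction A rule: infinite_finite_induct)
  case (insert l A)
  then show ?case
    using lattice_comb_add[of "\<lambda>i. c l * w l i"] lattice_comb_smult by simp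
qed (simp_all add: lattice_comb_def)

lemma \<phi>_lattice_comb: "j < d \<Longrightarrow> \<phi> j (lattice_comb y) = of_int (y j)"
  using \<phi>_lincomb D_pos by (simp add: lattice_comb_def)

lemma lattice_comb_inj:
  assumes "\<forall>i. d \<le> i \<longrightarrow> y i = 0" "\<forall>i. d \<le> i \<longrightarrow> z i = 0" "lattice_comb y = lattice_comb z"
  shows "y = z"
proof
  fix i
  show "y i = z i"
    using assms \<phi>_lattice_comb[of i y] \<phi>_lattice_comb[of i z] by (cases "i < d") auto
qed

sublocale coord: full_rank_lattice d D coord_lattice
proof
  show "0 < D"
    by (fact D_pos)
  show "(\<lambda>i. y i + z i) \<in> coord_lattice" if "y \<in> coord_lattice" "z \<in> coord_lattice" for y z
    using that by (simp add: coord_lattice_def lattice_comb_add int_coeffs_add)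
  show "(\<lambda>i. a * y i) \<in> coord_lattice" if "y \<in> coord_lattice" for y a
    using that by (simp add: coord_lattice_def lattice_comb_smult int_coeffs_const_mult)
  show "y i = 0" if "y \<in> coord_lattice" "d \<le> i" for y i
    using that by (simp add: coord_lattice_def)
  show "(\<lambda>i. if i = j then D else 0) \<in> coord_lattice" if "j < d" for j
  proof -
    have "lattice_comb (\<lambda>i. if i = j then D else 0) = u j"
      using that D_pos by (simp add: lattice_comb_def if_distrib if_distribR cong: if_cong)
    then show ?thesis
      using that int_coeffs_u by (simp add: coord_lattice_def)
  qed
qed

lemma integral_span_element_is_lattice_comb:
  assumes "f \<in> fps_span {..<d} u" "int_coeffs f"
  shows "\<exists>y\<in>coord_lattice. lattice_comb y = f"
proof -
  obtain x where x: "f = (\<Sum>i<d. fps_const (x i) * u i)"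
    using assms(1) by (auto simp: fps_span_def)
  have "\<exists>z. \<phi> i f = of_int z" if "i < d" for i
    using int_linear_\<phi>[OF that] assms(2) by (auto simp: int_linear_def elim!: Ints_cases)
  then obtain y0 where y0: "\<And>i. i < d \<Longrightarrow> \<phi> i f = of_int (y0 i)"
    by metis
  define y where "y i = (if i < d then y0 i else 0)" for i
  have "lattice_comb y = f"
    unfolding lattice_comb_def x
  proof (intro sum.cong refl arg_cong2[where f = "(*)"] arg_cong[where f = fps_const])
    fix i assume "i \<in> {..<d}"
    then have "of_int (y i) = of_int D * x i"
      using y0[of i] \<phi>_lincomb[of i x] x by (simp add: y_def)
    then show "of_int (y i) / of_int D = x i"
      using D_pos by simp
  qed
  then show ?thesis
    using assms(2) by (intro bexI[of _ y]) (auto simp: coord_lattice_def y_def)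
qed

theorem is_Z_basis_hnf:
  "is_Z_basis {f \<in> fps_span {..<d} u. int_coeffs f} (\<lambda>j. lattice_comb (coord.hnf_row j)) d"
  unfolding is_Z_basis_def
proof (intro conjI allI impI ballI)
  fix j assume "j < d"
  then show "lattice_comb (coord.hnf_row j) \<in> {f \<in> fps_span {..<d} u. int_coeffs f}"
    using coord.hnf_row_in_lattice lattice_comb_in_span by (simp add: coord_lattice_def)
next
  fix f assume "f \<in> {f \<in> fps_span {..<d} u. int_coeffs f}"
  then obtain y where y: "y \<in> coord_lattice" "lattice_comb y = f"
    using integral_span_element_is_lattice_comb by blast
  have "f = (\<Sum>l<d. fps_const (of_int (c l)) * lattice_comb (coord.hnf_row l))
          \<longleftrightarrow> y = (\<lambda>i. \<Sum>l<d. c l * coord.hnf_row l i)" for c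
  proof -
    have "\<forall>i. d \<le> i \<longrightarrow> (\<Sum>l<d. c l * coord.hnf_row l i) = 0"
      using coord.vanishes_beyond[OF coord.hnf_row_in_lattice] by simp
    then show ?thesis
      using y lattice_comb_inj[of y] coord.vanishes_beyond[of y]
      by (auto simp flip: lattice_comb_sum)
  qed
  then show "\<exists>!c. (\<forall>l\<ge>d. c l = 0) \<and> f = (\<Sum>l<d. fps_const (of_int (c l)) * lattice_comb (coord.hnf_row l))"
    using coord.hnf_coordinates[OF y(1)] by simp
qed

lemma norm_nth_hnf_basis_le:
  assumes "j < d"
  shows "norm (fps_nth (lattice_comb (coord.hnf_row j)) n) \<le> (\<Sum>i<d. norm (fps_nth (u i) n))"
proof -
  define c where "c i = (of_int (coord.hnf_row j i) / of_int D :: complex)" for i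
  have "norm (c i) \<le> 1" for i
    using coord.hnf_row_bounds[OF assms, of i] D_pos by (simp add: c_def norm_divide)
  have "norm (fps_nth (lattice_comb (coord.hnf_row j)) n) = norm (\<Sum>i<d. c i * fps_nth (u i) n)"
    by (simp add: lattice_comb_def c_def fps_sum_nth)
  also have "\<dots> \<le> (\<Sum>i<d. norm (c i) * norm (fps_nth (u i) n))"
    unfolding norm_mult[symmetric] by (rule norm_sum)
  also have "\<dots> \<le> (\<Sum>i<d. norm (fps_nth (u i) n))"
    using \<open>\<And>i. norm (c i) \<le> 1\<close> by (intro sum_mono mult_left_le_one_le) auto
  finally show ?thesis .
qed

end

theorem fps_span_int_coeffs_basis:
  fixes v :: "'i \<Rightarrow> complex fps"
  assumes "finite I" "\<And>i. i \<in> I \<Longrightarrow> int_coeffs (v i)"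
  shows "\<exists>r b. is_Z_basis {f \<in> fps_span I v. int_coeffs f} b r \<and>
           (\<forall>j<r. \<forall>n. norm (fps_nth (b j) n) \<le> (\<Sum>i\<in>I. norm (fps_nth (v i) n)))"
proof -
  have "finite (v ` I)" "\<And>g. g \<in> v ` I \<Longrightarrow> int_coeffs g"
    using assms by auto
  from exists_fps_dual_system[OF this] obtain d u \<phi> D where dual: "fps_dual_system d u \<phi> D"
    and u: "u ` {..<d} \<subseteq> v ` I" and v: "v ` I \<subseteq> fps_span {..<d} u"
    by blast
  interpret fps_dual_system d u \<phi> D
    by (fact dual)
  have span: "fps_span I v = fps_span {..<d} u"
  proof
    show "fps_span I v \<subseteq> fps_span {..<d} u"
      using v assms(1) by (intro fps_span_subset) auto
    show "fps_span {..<d} u \<subseteq> fps_span I v"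
    proof (intro fps_span_subset)
      fix i assume "i \<in> {..<d}"
      then obtain i' where "i' \<in> I" "u i = v i'"
        using u by blast
      then show "u i \<in> fps_span I v"
        using fps_span_base[OF assms(1)] by simp
    qed simp
  qed
  have sum_le: "(\<Sum>i<d. norm (fps_nth (u i) n)) \<le> (\<Sum>i\<in>I. norm (fps_nth (v i) n))" for n
  proof -
    have "(\<Sum>i<d. norm (fps_nth (u i) n)) = (\<Sum>g\<in>u ` {..<d}. norm (fps_nth g n))"
      using inj_on_u by (simp add: sum.reindex)
    also have "\<dots> \<le> (\<Sum>g\<in>v ` I. norm (fps_nth g n))"
      using u assms(1) by (intro sum_mono2) auto
    also have "\<dots> \<le> (\<Sum>i\<in>I. norm (fps_nth (v i) n))"
      using sum_image_le[OF assms(1), of "\<lambda>g. norm (fps_nth g n)" v] by (simp add: o_def)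
    finally show ?thesis .
  qed
  have "\<forall>j<d. \<forall>n. norm (fps_nth (lattice_comb (coord.hnf_row j)) n) \<le> (\<Sum>i\<in>I. norm (fps_nth (v i) n))"
    using norm_nth_hnf_basis_le sum_le order.trans by blast
  then show ?thesis
    using is_Z_basis_hnf unfolding span by blast
qed

section \<open>Integral quasimodular forms\<close>

lemma QMZ_eq_fps_span: "QMZ k = {f \<in> fps_span (wt_triples k) Emonomial. int_coeffs f}"
proof -
  have "(\<lambda>(a, b, c). fps_const (x (a, b, c)) * E2 ^ a * E4 ^ b * E6 ^ c) = (\<lambda>t. fps_const (x t) * Emonomial t)"
    for x :: "nat \<times> nat \<times> nat \<Rightarrow> complex"
    by (auto simp: Emonomial_def mult.assoc)
  then show ?thesis
    by (simp add: QMZ_def QM_def fps_span_def int_coeffs_def)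
qed

lemma finite_wt_triples: "finite (wt_triples k)"
  by (rule finite_subset[of _ "{..k} \<times> {..k} \<times> {..k}"]) (auto simp: wt_triples_def)

lemma card_wt_triples_le: "card (wt_triples k) \<le> (k + 1) ^ 3"
proof -
  have "card (wt_triples k) \<le> card ({..k} \<times> {..k} \<times> {..k})"
    by (rule card_mono) (auto simp: wt_triples_def)
  also have "\<dots> = (k + 1) ^ 3"
    by (simp add: card_cartesian_product power3_eq_cube)
  finally show ?thesis .
qed

lemma cube_le_four_pow: "10 \<le> k \<Longrightarrow> (k + 1) ^ 3 \<le> 4 ^ k"
proof (induction k rule: dec_induct)
  case (step m)
  have "100 \<le> m * m"
    using mult_le_mono[OF step(1) step(1)] by simp
  then have "(Suc m + 1) ^ 3 \<le> 4 * (m + 1) ^ 3"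
    by (simp add: power3_eq_cube algebra_simps)
  then show ?case
    using step(3) by simp
qed simp

lemma twenty_five_le_powr: "(25::real) \<le> (8 / 3) powr (10 / 3)"
proof -
  have "((8 / 3 :: real) powr (10 / 3)) ^ 3 = (8 / 3) powr (10 / 3 * real 3)"
    by (subst powr_realpow[symmetric]) (simp_all add: powr_powr)
  also have "\<dots> = (8 / 3) ^ 10"
    by (subst powr_realpow[symmetric]) simp_all
  finally have "(25::real) ^ 3 \<le> ((8 / 3) powr (10 / 3)) ^ 3"
    by (simp add: power_divide)
  then show ?thesis
    using power_mono_iff[of 25 "(8 / 3 :: real) powr (10 / 3)" 3] by simp
qed

lemma cube_mult_25_pow_le:
  assumes "10 \<le> k"
  shows "real ((k + 1) ^ 3) * 25 ^ k \<le> ((real k + 6) / 6) powr (real k ^ 2 / 3) * 109 * 2 ^ (2*k - 1)"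
proof -
  have "(25::real) ^ k \<le> ((8 / 3) powr (10 / 3)) ^ k"
    using twenty_five_le_powr by (intro power_mono) auto
  also have "\<dots> = (8 / 3) powr (10 / 3 * real k)"
    by (subst powr_realpow[symmetric]) (simp_all add: powr_powr)
  also have "\<dots> \<le> (8 / 3) powr (real k ^ 2 / 3)"
    using assms by (intro powr_mono) (auto simp: power2_eq_square)
  also have "\<dots> \<le> ((real k + 6) / 6) powr (real k ^ 2 / 3)"
    using assms by (intro powr_mono2) auto
  finally have pow: "(25::real) ^ k \<le> ((real k + 6) / 6) powr (real k ^ 2 / 3)" .
  have "real ((k + 1) ^ 3) \<le> 4 ^ k"
    using cube_le_four_pow[OF assms] by (metis numeral_power_le_of_nat_cancel_iff of_nat_le_iff of_nat_numeral of_nat_power)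
  also have "(4::real) ^ k = 2 ^ Suc (2*k - 1)"
    using assms by (simp add: power_mult)
  also have "\<dots> \<le> 109 * 2 ^ (2*k - 1)"
    by simp
  finally have cube: "real ((k + 1) ^ 3) \<le> 109 * 2 ^ (2*k - 1)" .
  show ?thesis
    using mult_mono[OF cube pow] by (simp add: algebra_simps)
qed

lemma sum_norm_nth_Emonomial_le:
  assumes "10 \<le> k" "n \<ge> 1"
  shows "(\<Sum>t\<in>wt_triples k. norm (fps_nth (Emonomial t) n))
           \<le> ((real k + 6) / 6) powr (real k ^ 2 / 3) * 109 * 2 ^ (2*k - 1)
               * real n ^ (2*k - 1) * (1 + ln (real n)) ^ k"
proof -
  define M where "M = real n ^ (2*k - 1) * (1 + ln (real n)) ^ k"
  have "0 \<le> M"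
    using \<open>n \<ge> 1\<close> by (simp add: M_def)
  have "(\<Sum>t\<in>wt_triples k. norm (fps_nth (Emonomial t) n)) \<le> real (card (wt_triples k)) * (25 ^ k * M)"
    using norm_nth_Emonomial_le[OF _ \<open>n \<ge> 1\<close>] unfolding M_def
    by (intro sum_bounded_above) (simp add: mult.assoc)
  also have "\<dots> \<le> real ((k + 1) ^ 3) * (25 ^ k * M)"
  proof (rule mult_right_mono)
    show "real (card (wt_triples k)) \<le> real ((k + 1) ^ 3)"
      using card_wt_triples_le by (simp only: of_nat_le_iff)
  qed (use \<open>0 \<le> M\<close> in simp)
  also have "\<dots> = real ((k + 1) ^ 3) * 25 ^ k * M"
    by (simp only: mult.assoc)
  also have "\<dots> \<le> ((real k + 6) / 6) powr (real k ^ 2 / 3) * 109 * 2 ^ (2*k - 1) * M"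
    using cube_mult_25_pow_le[OF assms(1)] \<open>0 \<le> M\<close> by (rule mult_right_mono)
  finally show ?thesis
    by (simp add: M_def mult.assoc)
qed

theorem proposition3p3:
  fixes k :: nat
  assumes "k \<ge> 10"
  shows "\<exists>r b. is_Z_basis (QMZ k) b r \<and>
    (\<forall>i<r. \<forall>n::nat. n \<ge> 1 \<longrightarrow>
       norm (fps_nth (b i) n) \<le>
         ((real k + 6) / 6) powr (real k ^ 2 / 3) * 109 * 2 ^ (2*k - 1)
           * real n ^ (2*k - 1) * (1 + ln (real n)) ^ k)"
proof -
  obtain r b where basis: "is_Z_basis (QMZ k) b r" and bound:
    "\<And>i n. i < r \<Longrightarrow> norm (fps_nth (b i) n) \<le> (\<Sum>t\<in>wt_triples k. norm (fps_nth (Emonomial t) n))"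
    using fps_span_int_coeffs_basis[of "wt_triples k" Emonomial, OF finite_wt_triples int_coeffs_Emonomial]
    unfolding QMZ_eq_fps_span by blast
  show ?thesis
    using basis bound sum_norm_nth_Emonomial_le[OF assms] order.trans by blast
qed

end
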